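(* Let $r$ be a positive integer. Every $r$-outdegree-critical tournament is strongly connected.
   Context: A tournament is an orientation of a finite complete graph. A digraph is called $r$-outdegree-critical if it has minimum outdegree $r$ and the deletion of any vertex decreases the minimum outdegree (i.e., the minimum outdegree of the digraph obtained by deleting any single vertex is less than $r$). A digraph is strongly connected if for every ordered pair of vertices $x,y$ there is a directed path from $x$ to $y$. *)

theory Defs
  imports Main
begin

text \<open>A digraph is given by a finite vertex set V and an arc relation A
  (A u v means there is an arc u -> v); only arcs between vertices of V count.\<close>

definition tournament :: "'a set \<Rightarrow> ('a \<Rightarrow> 'a \<Rightarrow> bool) \<Rightarrow> bool" where
  "tournament V A \<longleftrightarrow> finite V \<and> (\<forall>v\<in>V. \<not> A v v) \<and>
     (\<forall>u\<in>V. \<forall>v\<in>V. u \<noteq> v \<longrightarrow> (A u v \<longleftrightarrow> \<not> A v u))"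

definition outdeg :: "'a set \<Rightarrow> ('a \<Rightarrow> 'a \<Rightarrow> bool) \<Rightarrow> 'a \<Rightarrow> nat" where
  "outdeg V A v = card {w \<in> V. A v w}"

definition min_outdeg :: "'a set \<Rightarrow> ('a \<Rightarrow> 'a \<Rightarrow> bool) \<Rightarrow> nat" where
  "min_outdeg V A = Min (outdeg V A ` V)"

definition outdeg_critical :: "nat \<Rightarrow> 'a set \<Rightarrow> ('a \<Rightarrow> 'a \<Rightarrow> bool) \<Rightarrow> bool" where
  "outdeg_critical r V A \<longleftrightarrow> V \<noteq> {} \<and> min_outdeg V A = r \<and>
     (\<forall>v\<in>V. \<exists>w\<in>V - {v}. outdeg (V - {v}) A w < r)"

definition strongly_connected :: "'a set \<Rightarrow> ('a \<Rightarrow> 'a \<Rightarrow> bool) \<Rightarrow> bool" where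
  "strongly_connected V A \<longleftrightarrow>
     (\<forall>x\<in>V. \<forall>y\<in>V. (x, y) \<in> {(u, v). u \<in> V \<and> v \<in> V \<and> A u v}\<^sup>*)"

end

theory Submission
  imports Defs
begin

text \<open>If the tournament is not strongly connected, some vertex x does not reach some
  vertex y; the set R of vertices reachable from x is closed under out-arcs, so
  r \<le> outdeg x \<le> |R|. Delete y. A vertex w of R keeps its whole out-neighbourhood,
  which lies in R; a vertex w outside R beats every vertex of R, so it keeps outdegree
  at least |R|. Either way no outdegree drops below r, contradicting criticality.\<close>

definition out_closed :: "'a set \<Rightarrow> ('a \<Rightarrow> 'a \<Rightarrow> bool) \<Rightarrow> 'a set \<Rightarrow> bool" where
  "out_closed V A R \<longleftrightarrow> R \<subseteq> V \<and> (\<forall>u\<in>R. \<forall>v\<in>V. A u v \<longrightarrow> v \<in> R)"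

lemma min_outdeg_le_outdeg:
  assumes "finite V" and "v \<in> V"
  shows "min_outdeg V A \<le> outdeg V A v"
  using assms unfolding min_outdeg_def by simp

lemma not_strongly_connected_obtains_out_closed:
  assumes "\<not> strongly_connected V A"
  obtains R y where "out_closed V A R" and "R \<noteq> {}" and "y \<in> V" and "y \<notin> R"
proof -
  define E where "E = {(u, v). u \<in> V \<and> v \<in> V \<and> A u v}"
  obtain x y where "x \<in> V" and "y \<in> V" and "(x, y) \<notin> E\<^sup>*"
    using assms unfolding strongly_connected_def E_def by blast
  define R where "R = {z. (x, z) \<in> E\<^sup>*}"
  have "R \<subseteq> V"
  proof
    fix z assume "z \<in> R"
    then have "(x, z) \<in> E\<^sup>*" unfolding R_def by simp
    then show "z \<in> V" using \<open>x \<in> V\<close> by (induction rule: rtrancl_induct) (auto simp: E_def)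
  qed
  then have "out_closed V A R"
    unfolding out_closed_def R_def E_def by (auto intro: rtrancl_into_rtrancl)
  moreover have "x \<in> R" and "y \<notin> R"
    using \<open>(x, y) \<notin> E\<^sup>*\<close> unfolding R_def by simp_all
  ultimately show thesis using that \<open>y \<in> V\<close> by blast
qed

lemma outdeg_le_card_out_closed:
  assumes "finite V" and "out_closed V A R" and "u \<in> R"
  shows "outdeg V A u \<le> card R"
proof -
  have "{v \<in> V. A u v} \<subseteq> R" and "finite R"
    using assms finite_subset unfolding out_closed_def by auto
  then show ?thesis unfolding outdeg_def by (rule card_mono[rotated])
qed

lemma outdeg_delete_outside_out_closed:
  assumes "out_closed V A R" and "u \<in> R" and "y \<notin> R"
  shows "outdeg (V - {y}) A u = outdeg V A u"
proof -
  have "{v \<in> V - {y}. A u v} = {v \<in> V. A u v}"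
    using assms unfolding out_closed_def by blast
  then show ?thesis unfolding outdeg_def by simp
qed

lemma tournament_card_out_closed_le_outdeg:
  assumes "tournament V A" and "out_closed V A R" and "w \<in> V - R" and "y \<notin> R"
  shows "card R \<le> outdeg (V - {y}) A w"
proof -
  have "A w z" if "z \<in> R" for z
  proof -
    have "z \<in> V" and "z \<noteq> w" and "\<not> A z w"
      using assms(2,3) that unfolding out_closed_def by auto
    then show ?thesis using assms(1,3) unfolding tournament_def by blast
  qed
  then have "R \<subseteq> {z \<in> V - {y}. A w z}"
    using assms(2,4) unfolding out_closed_def by auto
  moreover have "finite V" using assms(1) unfolding tournament_def by simp
  ultimately show ?thesis unfolding outdeg_def by (intro card_mono) auto
qed

lemma tournament_min_outdeg_le_outdeg_delete:
  assumes "tournament V A" and "out_closed V A R" and "R \<noteq> {}" and "y \<notin> R"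
    and "w \<in> V - {y}"
  shows "min_outdeg V A \<le> outdeg (V - {y}) A w"
proof -
  have "finite V" using assms(1) unfolding tournament_def by simp
  show ?thesis
  proof (cases "w \<in> R")
    case True
    then show ?thesis
      using assms \<open>finite V\<close> by (simp add: outdeg_delete_outside_out_closed min_outdeg_le_outdeg)
  next
    case False
    obtain x where "x \<in> R" using \<open>R \<noteq> {}\<close> by blast
    then have "x \<in> V" using assms(2) unfolding out_closed_def by blast
    have "min_outdeg V A \<le> outdeg V A x"
      using \<open>finite V\<close> \<open>x \<in> V\<close> by (rule min_outdeg_le_outdeg)
    also have "\<dots> \<le> card R"
      using \<open>finite V\<close> assms(2) \<open>x \<in> R\<close> by (rule outdeg_le_card_out_closed)
    also have "\<dots> \<le> outdeg (V - {y}) A w"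
      using assms False by (intro tournament_card_out_closed_le_outdeg) auto
    finally show ?thesis .
  qed
qed

theorem lemma2p2:
  fixes r :: nat and V :: "'a set" and A :: "'a \<Rightarrow> 'a \<Rightarrow> bool"
  assumes "r \<ge> 1" and "tournament V A" and "outdeg_critical r V A"
  shows "strongly_connected V A"
proof (rule ccontr)
  assume "\<not> strongly_connected V A"
  then obtain R y where "out_closed V A R" "R \<noteq> {}" "y \<in> V" "y \<notin> R"
    by (rule not_strongly_connected_obtains_out_closed)
  moreover obtain w where "w \<in> V - {y}" and "outdeg (V - {y}) A w < r"
    using assms(3) \<open>y \<in> V\<close> unfolding outdeg_critical_def by blast
  moreover have "min_outdeg V A = r"
    using assms(3) unfolding outdeg_critical_def by simp
  ultimately show False
    using tournament_min_outdeg_le_outdeg_delete[OF assms(2)] by fastforce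
qed

end
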